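(* Let $G$ be a finite directed graph and $R\subseteq V(G)$. Let $F_i$ and $F_k$ be maximal faces of $\mathrm{DT}_R(G)$, and let $(x\rightarrow y)\in F_i\setminus F_k$ be an edge that is nice in $\mathrm{DT}_R(G)$. Then there is a maximal face $F_j$ of $\mathrm{DT}_R(G)$ and an $e\in F_k$ such that $F_i\cap F_k\subseteq F_j\cap F_k=F_k\setminus\{e\}$.
   Context: A directed forest in $G$ is a set of edges of $G$ which, viewed as a graph on $V(G)$, is acyclic and has at most one edge directed to each vertex; its roots are the vertices with no forest edge directed to them. $\mathrm{DT}(G)$ is the simplicial complex with vertex set $E(G)$ whose simplices are the directed forests; $\mathrm{DT}_R(G)$ is the subcomplex generated by the directed forests with root set exactly $R$. An edge $(x\rightarrow y)$ of $G$ is nice in a subcomplex $\Delta$ of $\mathrm{DT}(G)$ if (i) there is an edge $(z\rightarrow y)$ in $\Delta$ with $z\ne x$, and (ii) every forest $F\in\Delta$ without an edge directed to $y$ satisfies $F\cup\{(x\rightarrow y)\}\in\Delta$. *)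

theory Defs
  imports Main
begin

text \<open>A finite directed graph G is given by a vertex set V and an edge set
  E \<subseteq> V \<times> V; an edge (x \<rightarrow> y) is the pair (x, y).\<close>

definition dforest :: "('a \<times> 'a) set \<Rightarrow> ('a \<times> 'a) set \<Rightarrow> bool" where
  "dforest E F \<longleftrightarrow> F \<subseteq> E \<and> acyclic F \<and>
     (\<forall>x z y. (x, y) \<in> F \<and> (z, y) \<in> F \<longrightarrow> x = z)"

definition roots :: "'a set \<Rightarrow> ('a \<times> 'a) set \<Rightarrow> 'a set" where
  "roots V F = {v \<in> V. \<forall>x. (x, v) \<notin> F}"

definition DT :: "('a \<times> 'a) set \<Rightarrow> ('a \<times> 'a) set set" where
  "DT E = {F. dforest E F}"

definition DT_R :: "'a set \<Rightarrow> ('a \<times> 'a) set \<Rightarrow> 'a set \<Rightarrow> ('a \<times> 'a) set set" where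
  "DT_R V E R = {F. \<exists>F'. dforest E F' \<and> roots V F' = R \<and> F \<subseteq> F'}"

definition maximal_face :: "('a \<times> 'a) set set \<Rightarrow> ('a \<times> 'a) set \<Rightarrow> bool" where
  "maximal_face \<Delta> F \<longleftrightarrow> F \<in> \<Delta> \<and> (\<forall>F'\<in>\<Delta>. F \<subseteq> F' \<longrightarrow> F' = F)"

definition nice :: "('a \<times> 'a) set \<Rightarrow> ('a \<times> 'a) set set \<Rightarrow> 'a \<Rightarrow> 'a \<Rightarrow> bool" where
  "nice E \<Delta> x y \<longleftrightarrow> (x, y) \<in> E \<and>
     (\<exists>z. z \<noteq> x \<and> {(z, y)} \<in> \<Delta>) \<and>
     (\<forall>F\<in>\<Delta>. (\<forall>w. (w, y) \<notin> F) \<longrightarrow> insert (x, y) F \<in> \<Delta>)"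

end

theory Submission
  imports Defs
begin

text \<open>A directed forest with root set R has exactly one edge into every vertex of V - R, so it
  is a maximal face of DT_R as soon as it has root set R. Given the nice edge (x \<rightarrow> y) of Fi,
  the vertex y is not a root, so Fk has an edge (z \<rightarrow> y), and z \<noteq> x. Exchanging it for
  (x \<rightarrow> y) gives a face of DT_R by niceness, and it still has an edge into every non-root, so it
  is a maximal face Fj with Fj \<inter> Fk = Fk - {(z \<rightarrow> y)}. Finally Fi cannot contain (z \<rightarrow> y), since
  it already contains (x \<rightarrow> y).\<close>

lemma dforest_in_edge_unique:
  assumes "dforest E F" "(x, y) \<in> F" "(z, y) \<in> F"
  shows "x = z"
  using assms unfolding dforest_def by blast

lemma not_root_has_in_edge:
  assumes "v \<in> V - roots V F"
  shows "\<exists>u. (u, v) \<in> F"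
  using assms unfolding roots_def by auto

lemma nice_insert:
  assumes "nice E \<Delta> x y" "F \<in> \<Delta>" "\<And>w. (w, y) \<notin> F"
  shows "insert (x, y) F \<in> \<Delta>"
  using assms unfolding nice_def by simp

lemma dforest_subset_eq_if_covers_nonroots:
  assumes "dforest E G" "E \<subseteq> V \<times> V" "H \<subseteq> G"
    and covers: "\<And>v. v \<in> V - roots V G \<Longrightarrow> \<exists>u. (u, v) \<in> H"
  shows "H = G"
proof
  show "G \<subseteq> H"
  proof
    fix p assume "p \<in> G"
    then obtain a b where ab: "p = (a, b)" "(a, b) \<in> G" by (cases p) auto
    then have "b \<in> V - roots V G"
      using assms(1,2) unfolding dforest_def roots_def by auto
    then obtain u where "(u, b) \<in> H" using covers by blast
    moreover have "u = a"
      using dforest_in_edge_unique[OF assms(1)] \<open>(u, b) \<in> H\<close> ab(2) assms(3) by blast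
    ultimately show "p \<in> H" using ab(1) by simp
  qed
qed (fact assms(3))

lemma maximal_face_DT_R_iff:
  assumes "E \<subseteq> V \<times> V"
  shows "maximal_face (DT_R V E R) F \<longleftrightarrow> dforest E F \<and> roots V F = R"
proof
  assume max: "maximal_face (DT_R V E R) F"
  then obtain F' where F': "dforest E F'" "roots V F' = R" "F \<subseteq> F'"
    unfolding maximal_face_def DT_R_def by auto
  then have "F' \<in> DT_R V E R" unfolding DT_R_def by auto
  with max F'(3) have "F' = F" unfolding maximal_face_def by auto
  with F' show "dforest E F \<and> roots V F = R" by simp
next
  assume F: "dforest E F \<and> roots V F = R"
  have "F' = F" if F': "F' \<in> DT_R V E R" "F \<subseteq> F'" for F'
  proof -
    obtain G where G: "dforest E G" "roots V G = R" "F' \<subseteq> G"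
      using F'(1) unfolding DT_R_def by auto
    have "F = G"
    proof (rule dforest_subset_eq_if_covers_nonroots[OF G(1) assms])
      show "F \<subseteq> G" using F'(2) G(3) by simp
      fix v assume "v \<in> V - roots V G"
      with F G(2) show "\<exists>u. (u, v) \<in> F" using not_root_has_in_edge[of v V F] by simp
    qed
    with F'(2) G(3) show ?thesis by simp
  qed
  moreover have "F \<in> DT_R V E R" using F unfolding DT_R_def by auto
  ultimately show "maximal_face (DT_R V E R) F" unfolding maximal_face_def by blast
qed

lemma maximal_face_DT_R_exchange_nice:
  assumes "E \<subseteq> V \<times> V" "maximal_face (DT_R V E R) F" "(z, y) \<in> F"
    and "nice E (DT_R V E R) x y"
  shows "maximal_face (DT_R V E R) (insert (x, y) (F - {(z, y)}))"
    (is "maximal_face _ ?F'")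
proof -
  have F: "dforest E F" "roots V F = R"
    using assms(2) by (simp_all add: maximal_face_DT_R_iff[OF assms(1)])
  have "F - {(z, y)} \<in> DT_R V E R" using F unfolding DT_R_def by auto
  moreover have "(w, y) \<notin> F - {(z, y)}" for w
    using dforest_in_edge_unique[OF F(1) _ assms(3), of w] by auto
  ultimately have "?F' \<in> DT_R V E R" by (rule nice_insert[OF assms(4)])
  then obtain G where G: "dforest E G" "roots V G = R" "?F' \<subseteq> G"
    unfolding DT_R_def by auto
  have "?F' = G"
  proof (rule dforest_subset_eq_if_covers_nonroots[OF G(1) assms(1) G(3)])
    fix v assume "v \<in> V - roots V G"
    with F(2) G(2) have "v \<in> V - roots V F" by metis
    then obtain u where "(u, v) \<in> F" using not_root_has_in_edge[of v V F] by blast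
    then show "\<exists>u. (u, v) \<in> ?F'" by (cases "v = y") auto
  qed
  with G show ?thesis by (simp add: maximal_face_DT_R_iff[OF assms(1)])
qed

theorem lemma2p8:
  fixes V :: "'a set" and E :: "('a \<times> 'a) set" and R :: "'a set"
  assumes "finite V" and "E \<subseteq> V \<times> V" and "R \<subseteq> V"
    and "maximal_face (DT_R V E R) Fi" and "maximal_face (DT_R V E R) Fk"
    and "(x, y) \<in> Fi - Fk"
    and "nice E (DT_R V E R) x y"
  shows "\<exists>Fj e. maximal_face (DT_R V E R) Fj \<and> e \<in> Fk \<and>
           Fi \<inter> Fk \<subseteq> Fj \<inter> Fk \<and> Fj \<inter> Fk = Fk - {e}"
proof -
  have Fi: "dforest E Fi" "roots V Fi = R" and Fk: "roots V Fk = R"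
    using assms(4,5) by (simp_all add: maximal_face_DT_R_iff[OF assms(2)])
  have xy: "(x, y) \<in> Fi" "(x, y) \<notin> Fk" using assms(6) by simp_all
  then have "y \<in> V" using Fi(1) assms(2) unfolding dforest_def by blast
  moreover have "y \<notin> roots V Fk" using xy(1) Fi(2) Fk unfolding roots_def by blast
  ultimately obtain z where z: "(z, y) \<in> Fk" using not_root_has_in_edge[of y V Fk] by blast
  define Fj where "Fj = insert (x, y) (Fk - {(z, y)})"
  have "maximal_face (DT_R V E R) Fj"
    unfolding Fj_def using assms(2,5) z assms(7) by (rule maximal_face_DT_R_exchange_nice)
  moreover have Fj_Fk: "Fj \<inter> Fk = Fk - {(z, y)}" using xy(2) unfolding Fj_def by blast
  moreover have "(z, y) \<notin> Fi"
    using dforest_in_edge_unique[OF Fi(1) xy(1), of z] xy(2) z by blast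
  then have "Fi \<inter> Fk \<subseteq> Fj \<inter> Fk" using Fj_Fk by auto
  ultimately show ?thesis using z by blast
qed

end
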